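(* Consider the GSEM described in the context in the "CCD" case: conditional on $\mathbf W=\mathbf w$, $X\sim N(\mu_x,\sigma_x^2)$ with $\mu_x=\mathbf w_1^\top\boldsymbol\beta_x$ and $M\sim N(\mu_m,\sigma_m^2)$ with $\mu_m=\mathbf w^\top\boldsymbol\beta_m$ ($\sigma_x,\sigma_m>0$), and $Y$ is Bernoulli with $P(Y=1\mid\mathbf w)=\mathrm{expit}(\mathbf w^\top\boldsymbol\beta_y)$, $\mathrm{expit}(t)=e^t/(1+e^t)$. Define $l_y(\mathbf w)=\Phi^{-1}(F_y(0\mid\mathbf w))=-\Phi^{-1}(\mathrm{expit}(\mathbf w^\top\boldsymbol\beta_y))$, $z_x=(x-\mathbf w_1^\top\boldsymbol\beta_x)/\sigma_x$, and $\psi(z_a,z_m^* )=\Phi(\tau_y l_y(\mathbf w)-\gamma z_a-\tau_m\beta z_m^* )$. For real $z$ let $\pi(\cdot\mid Z_x=z)$ denote the $N\!\left(\alpha z/\tau_m,\,1/\tau_m^2\right)$ density (the conditional density of $Z_m^*$ given $Z_x=z$). Then for any $x_0,x_1$, $$\mathrm{NDE}(x_0,x_1;\mathbf w)=\int_{-\infty}^{\infty}\big(\psi(z_{x_0},z_m^* )-\psi(z_{x_1},z_m^* )\big)\,\pi(z_m^*\mid Z_x=z_{x_0})\,dz_m^*,$$ $$\mathrm{NIE}(x_0,x_1;\mathbf w)=\int_{-\infty}^{\infty}\psi(z_{x_1},z_m^* )\,\pi(z_m^*\mid Z_x=z_{x_0})\,dz_m^*-\int_{-\infty}^{\infty}\psi(z_{x_1},z_m^*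 )\,\pi(z_m^*\mid Z_x=z_{x_1})\,dz_m^*.$$ Consequently, for $x_0\neq x_1$: $\mathrm{NDE}(x_0,x_1;\mathbf w)=0$ if and only if $\gamma=0$, and $\mathrm{NIE}(x_0,x_1;\mathbf w)=0$ if $\alpha=0$ or $\beta=0$.
   Context: Generalized structural equation model (GSEM). Let $X$ (exposure), $M$ (mediator), $Y$ (outcome) be scalar random variables and $\mathbf W=(\mathbf W_1^\top,\mathbf W_2^\top)^\top$ a vector of confounders (first entry $1$), with $\mathbf w=(\mathbf w_1^\top,\mathbf w_2^\top)^\top$ a fixed value. Fix real parameters $\alpha,\beta,\gamma$ and let $(Z_x,Z_m,Z_y)$ be latent variables with $Z_x\sim N(0,1)$, $Z_m=\alpha Z_x+\epsilon_m$, $Z_y=\gamma Z_x+\beta Z_m+\epsilon_y$, where $Z_x,\epsilon_m,\epsilon_y$ are independent $N(0,1)$ (independent of $\mathbf W$). Put $\tau_m=\sqrt{\alpha^2+1}$, $\tau_y=\sqrt{(\gamma+\alpha\beta)^2+\beta^2+1}$, $Z_m^*=Z_m/\tau_m$, $Z_y^*=Z_y/\tau_y$ (each standard normal). Conditional on $\mathbf W=\mathbf w$, with marginal CDFs $F_x(\cdot\mid\mathbf w),F_m(\cdot\mid\mathbf w),F_y(\cdot\mid\mathbf w)$ given by generalized linear models, the observed variables are $X=F_x^{-1}(\Phi(Z_x))$, $M=F_m^{-1}(\Phi(Z_m^* ))$, $Y=F_y^{-1}(\Phi(Z_y^* ))$, where $\Phi,\phi$ denote the standard normal CDF and density and $F^{-1}$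 is the generalized inverse (quantile function). Counterfactual mean: $\mathrm E\{Y(x_a,M(x_b))\mid\mathbf W=\mathbf w\}:=\mathrm E_M\{\mathrm E(Y\mid M,X=x_a,\mathbf W=\mathbf w)\mid X=x_b,\mathbf W=\mathbf w\}$. Conditional natural direct and indirect effects for a change of $X$ from $x_0$ to $x_1$: $\mathrm{NDE}(x_0,x_1;\mathbf w)=\mathrm E\{Y(x_1,M(x_0))\mid\mathbf w\}-\mathrm E\{Y(x_0,M(x_0))\mid\mathbf w\}$ and $\mathrm{NIE}(x_0,x_1;\mathbf w)=\mathrm E\{Y(x_1,M(x_1))\mid\mathbf w\}-\mathrm E\{Y(x_1,M(x_0))\mid\mathbf w\}$. *)

theory Defs
  imports "HOL-Probability.Probability"
begin

definition std_normal :: "real measure" where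
  "std_normal = density lborel std_normal_density"

definition Phi :: "real \<Rightarrow> real" where
  "Phi x = measure std_normal {..x}"

definition normal_cdf :: "real \<Rightarrow> real \<Rightarrow> real \<Rightarrow> real" where
  "normal_cdf mu s x = measure (density lborel (normal_density mu s)) {..x}"

definition gen_inv :: "(real \<Rightarrow> real) \<Rightarrow> real \<Rightarrow> real" where
  "gen_inv F u = Inf {y. u \<le> F y}"

definition expit :: "real \<Rightarrow> real" where
  "expit t = exp t / (1 + exp t)"

definition bernoulli_cdf :: "real \<Rightarrow> real \<Rightarrow> real" where
  "bernoulli_cdf p y = (if y < 0 then 0 else if y < 1 then 1 - p else 1)"

definition tau_m :: "real \<Rightarrow> real" where
  "tau_m \<alpha> = sqrt (\<alpha>^2 + 1)"

definition tau_y :: "real \<Rightarrow> real \<Rightarrow> real \<Rightarrow> real" where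
  "tau_y \<alpha> \<beta> \<gamma> = sqrt ((\<gamma> + \<alpha> * \<beta>)^2 + \<beta>^2 + 1)"

(* GSEM, conditional on W = w, with marginal CDFs Fx Fm Fy (given w).
   Observed variables: X = Fx^-1(Phi Z_x), M = Fm^-1(Phi Zm_star), Y = Fy^-1(Phi Zy_star).
   Since X and M (continuous case) determine Z_x = Phi^-1(Fx X) and Zm_star = Phi^-1(Fm M),
   conditioning on (M = m, X = x) amounts to fixing the latent Z_x, Z_m; the remaining
   randomness eps_y ~ N(0,1) is independent of them.  Hence
     E(Y | M = m, X = x, w) = E_eps { Fy^-1(Phi((gamma z_x + beta tau_m zm_star + eps)/tau_y)) } *)
definition gsem_reg ::
  "real \<Rightarrow> real \<Rightarrow> real \<Rightarrow> (real \<Rightarrow> real) \<Rightarrow> (real \<Rightarrow> real) \<Rightarrow> (real \<Rightarrow> real)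
     \<Rightarrow> real \<Rightarrow> real \<Rightarrow> real" where
  "gsem_reg \<alpha> \<beta> \<gamma> Fx Fm Fy x m =
     (\<integral>e. gen_inv Fy (Phi ((\<gamma> * gen_inv Phi (Fx x)
                         + \<beta> * tau_m \<alpha> * gen_inv Phi (Fm m) + e) / tau_y \<alpha> \<beta> \<gamma>)) \<partial>std_normal)"

(* Counterfactual mean E{Y(xa, M(xb)) | w} = E_M{ E(Y | M, X = xa, w) | X = xb, w },
   where given X = xb (i.e. Z_x = z_xb) we have M = Fm^-1(Phi((alpha z_xb + eps_m)/tau_m)),
   eps_m ~ N(0,1). *)
definition gsem_cf ::
  "real \<Rightarrow> real \<Rightarrow> real \<Rightarrow> (real \<Rightarrow> real) \<Rightarrow> (real \<Rightarrow> real) \<Rightarrow> (real \<Rightarrow> real)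
     \<Rightarrow> real \<Rightarrow> real \<Rightarrow> real" where
  "gsem_cf \<alpha> \<beta> \<gamma> Fx Fm Fy xa xb =
     (\<integral>e. gsem_reg \<alpha> \<beta> \<gamma> Fx Fm Fy xa
            (gen_inv Fm (Phi ((\<alpha> * gen_inv Phi (Fx xb) + e) / tau_m \<alpha>))) \<partial>std_normal)"

definition NDE where
  "NDE \<alpha> \<beta> \<gamma> Fx Fm Fy x0 x1 =
     gsem_cf \<alpha> \<beta> \<gamma> Fx Fm Fy x1 x0 - gsem_cf \<alpha> \<beta> \<gamma> Fx Fm Fy x0 x0"

definition NIE where
  "NIE \<alpha> \<beta> \<gamma> Fx Fm Fy x0 x1 =
     gsem_cf \<alpha> \<beta> \<gamma> Fx Fm Fy x1 x1 - gsem_cf \<alpha> \<beta> \<gamma> Fx Fm Fy x1 x0"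

end

theory Submission
  imports Defs
begin

text \<open>Since both \<open>X\<close> and \<open>M\<close> are normal, the quantile transforms in the model are affine, so
  conditioning on \<open>X = x\<close> and \<open>M = m\<close> fixes the latent scores \<open>Z\<^sub>x = z\<^sub>x\<close> and \<open>Z\<^sub>m\<^sup>* = z\<^sub>m\<^sup>*\<close>.
  The binary outcome is \<open>Y = 1\<close> exactly when the remaining noise \<open>\<epsilon>\<^sub>y\<close> exceeds the threshold
  \<open>\<tau>\<^sub>y l\<^sub>y - \<gamma> z\<^sub>x - \<tau>\<^sub>m \<beta> z\<^sub>m\<^sup>*\<close>, so the regression of \<open>Y\<close> on \<open>(M, X)\<close> is \<open>1 - \<psi>(z\<^sub>x, z\<^sub>m\<^sup>*)\<close>.
  Averaging over the conditional law \<open>\<pi>\<close> of \<open>Z\<^sub>m\<^sup>*\<close> gives the two formulas. Since \<open>\<Phi>\<close> is strictly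
  increasing, \<open>\<psi>(z\<^sub>x\<^sub>0, \<cdot>) - \<psi>(z\<^sub>x\<^sub>1, \<cdot>)\<close> has the strict sign of \<open>\<gamma>(z\<^sub>x\<^sub>1 - z\<^sub>x\<^sub>0)\<close>, whence the
  characterisation of a vanishing direct effect; without an \<open>X \<rightarrow> M\<close> or \<open>M \<rightarrow> Y\<close> path the
  counterfactual mean does not depend on the value of \<open>X\<close> fed to the mediator.\<close>

lemma prob_space_std_normal: "prob_space std_normal"
  unfolding std_normal_def by (rule prob_space_normal_density) simp

lemma sets_std_normal [simp, measurable_cong]: "sets std_normal = sets borel"
  by (simp add: std_normal_def)

lemma space_std_normal [simp]: "space std_normal = UNIV"
  by (simp add: std_normal_def)

lemma real_distribution_std_normal: "real_distribution std_normal"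
proof -
  interpret prob_space std_normal by (rule prob_space_std_normal)
  show ?thesis by unfold_locales simp
qed

lemma finite_borel_measure_std_normal: "finite_borel_measure std_normal"
  by (rule real_distribution.finite_borel_measure_M[OF real_distribution_std_normal])

lemma Phi_eq_cdf: "Phi = cdf std_normal"
  by (simp add: Phi_def cdf_def fun_eq_iff)

lemma Phi_mono: "x \<le> y \<Longrightarrow> Phi x \<le> Phi y"
  unfolding Phi_eq_cdf by (rule finite_borel_measure.cdf_nondecreasing[OF finite_borel_measure_std_normal])

lemma borel_measurable_Phi [measurable]: "Phi \<in> borel_measurable borel"
  by (rule borel_measurable_mono) (auto simp: mono_def Phi_mono)

lemma Phi_le_1: "Phi x \<le> 1"
  unfolding Phi_eq_cdf by (rule real_distribution.cdf_bounded_prob[OF real_distribution_std_normal])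

lemma Phi_at_top: "(Phi \<longlongrightarrow> 1) at_top"
  unfolding Phi_eq_cdf by (rule real_distribution.cdf_lim_at_top_prob[OF real_distribution_std_normal])

lemma Phi_at_bot: "(Phi \<longlongrightarrow> 0) at_bot"
  unfolding Phi_eq_cdf by (rule finite_borel_measure.cdf_lim_at_bot[OF finite_borel_measure_std_normal])

lemma emeasure_std_normal:
  "A \<in> sets borel \<Longrightarrow>
     emeasure std_normal A = (\<integral>\<^sup>+ x. ennreal (std_normal_density x) * indicator A x \<partial>lborel)"
  unfolding std_normal_def by (subst emeasure_density) auto

lemma isCont_Phi: "isCont Phi x"
proof -
  have "emeasure std_normal {x} = 0"
    using AE_lborel_singleton[of x]
    by (subst emeasure_std_normal, simp, subst nn_integral_0_iff_AE, simp) (auto elim: AE_mp)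
  then have "measure std_normal {x} = 0"
    by (simp add: measure_def)
  then show ?thesis
    unfolding Phi_eq_cdf using finite_borel_measure.isCont_cdf[OF finite_borel_measure_std_normal] by simp
qed

lemma Phi_strict_mono: assumes "x < y" shows "Phi x < Phi y"
proof -
  interpret prob_space std_normal by (rule prob_space_std_normal)
  have "emeasure std_normal {x<..y} \<noteq> 0"
  proof
    assume "emeasure std_normal {x<..y} = 0"
    then have "AE t in lborel. ennreal (std_normal_density t) * indicator {x<..y} t = 0"
      by (subst (asm) emeasure_std_normal, simp) (subst (asm) nn_integral_0_iff_AE, auto)
    then have "AE t in lborel. t \<notin> {x<..y}"
      by eventually_elim (auto simp: std_normal_density_def indicator_def split: if_splits)
    then have "{x<..y} \<in> null_sets lborel"
      by (subst AE_iff_null_sets) auto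
    with assms show False by auto
  qed
  then have "measure std_normal {x<..y} > 0"
    by (simp add: emeasure_eq_measure zero_less_measure_iff)
  moreover have "Phi y - Phi x = measure std_normal {x<..y}"
    unfolding Phi_eq_cdf by (rule finite_borel_measure.cdf_diff_eq[OF finite_borel_measure_std_normal assms])
  ultimately show ?thesis by simp
qed

lemma Phi_le_iff: "Phi x \<le> Phi y \<longleftrightarrow> x \<le> y"
  using Phi_strict_mono Phi_mono by (meson not_le)

lemma Phi_pos: "0 < Phi x"
proof -
  have "0 \<le> Phi (x - 1)" unfolding Phi_def by simp
  with Phi_strict_mono[of "x - 1" x] show ?thesis by simp
qed

lemma gen_inv_Phi_Phi [simp]: "gen_inv Phi (Phi s) = s"
proof -
  have "{y. Phi s \<le> Phi y} = {s..}" by (auto simp: Phi_le_iff)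
  then show ?thesis unfolding gen_inv_def by simp
qed

lemma Phi_surj_unit_interval: assumes "0 < u" "u < 1" shows "\<exists>l. Phi l = u"
proof -
  obtain b where b: "u < Phi b"
    using order_tendstoD(1)[OF Phi_at_top assms(2)] by (auto simp: eventually_at_top_linorder)
  obtain a where a: "Phi a < u"
    using order_tendstoD(2)[OF Phi_at_bot assms(1)] by (auto simp: eventually_at_bot_linorder)
  with b have "a \<le> b"
    using Phi_le_iff by fastforce
  with a b show ?thesis
    using IVT[of Phi a u b] isCont_Phi by (meson less_imp_le)
qed

lemma Phi_gen_inv_Phi: "0 < u \<Longrightarrow> u < 1 \<Longrightarrow> Phi (gen_inv Phi u) = u"
  using Phi_surj_unit_interval by fastforce

lemma std_normal_density_affine:
  assumes "t > 0" shows "t * std_normal_density (t * z - a) = normal_density (a / t) (1 / t) z"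
proof -
  have "sqrt (2 * pi * (1 / t)\<^sup>2) = sqrt (2 * pi) / t"
    using assms by (simp add: real_sqrt_mult real_sqrt_divide power2_eq_square)
  moreover have "- (z - a / t)\<^sup>2 / (2 * (1 / t)\<^sup>2) = - (t * z - a)\<^sup>2 / 2"
    using assms by (simp add: power2_eq_square field_simps)
  ultimately show ?thesis
    unfolding normal_density_def std_normal_density_def using assms by simp
qed

lemma integral_std_normal_affine:
  fixes g :: "real \<Rightarrow> real"
  assumes [measurable]: "g \<in> borel_measurable borel" and "t > 0"
  shows "(\<integral>e. g ((a + e) / t) \<partial>std_normal) = (\<integral>z. g z \<partial>density lborel (normal_density (a / t) (1 / t)))"
proof -
  have "(\<integral>e. g ((a + e) / t) \<partial>std_normal) = (\<integral>e. std_normal_density e * g ((a + e) / t) \<partial>lborel)"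
    unfolding std_normal_def by (subst integral_density) auto
  also have "\<dots> = t * (\<integral>z. std_normal_density (t * z - a) * g z \<partial>lborel)"
    using \<open>t > 0\<close> by (subst lborel_integral_real_affine[where c = t and t = "- a"]) auto
  also have "\<dots> = (\<integral>z. normal_density (a / t) (1 / t) z * g z \<partial>lborel)"
    using std_normal_density_affine[OF \<open>t > 0\<close>]
    by (simp add: integral_mult_right_zero[symmetric] mult.assoc[symmetric])
  also have "\<dots> = (\<integral>z. g z \<partial>density lborel (normal_density (a / t) (1 / t)))"
    by (subst integral_density) auto
  finally show ?thesis .
qed

lemma normal_cdf_eq_Phi: assumes "s > 0" shows "normal_cdf m s x = Phi ((x - m) / s)"
proof -
  have "normal_cdf m s x = (\<integral>z. indicator {..x} z \<partial>density lborel (normal_density m s))"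
    by (simp add: normal_cdf_def)
  also have "\<dots> = (\<integral>e. indicator {..x} ((m / s + e) / (1 / s)) \<partial>std_normal)"
    using integral_std_normal_affine[of "indicator {..x}" "1 / s" "m / s"] assms by simp
  also have "\<dots> = (\<integral>e. indicator {..(x - m) / s} e \<partial>std_normal)"
    using assms by (intro Bochner_Integration.integral_cong)
      (auto simp: indicator_def pos_le_divide_eq mult.commute algebra_simps)
  also have "\<dots> = Phi ((x - m) / s)"
    by (simp add: Phi_def)
  finally show ?thesis .
qed

lemma gen_inv_normal_cdf_Phi:
  assumes "s > 0" shows "gen_inv (normal_cdf m s) (Phi v) = m + s * v"
proof -
  have "{y. Phi v \<le> normal_cdf m s y} = {m + s * v ..}"
    using assms by (auto simp: normal_cdf_eq_Phi Phi_le_iff pos_le_divide_eq algebra_simps)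
  then show ?thesis by (simp add: gen_inv_def)
qed

lemma gen_inv_bernoulli_cdf:
  assumes "0 < p" "p < 1" "0 < u" "u \<le> 1"
  shows "gen_inv (bernoulli_cdf p) u = (if u \<le> 1 - p then 0 else 1)"
proof -
  have "{y. u \<le> bernoulli_cdf p y} = (if u \<le> 1 - p then {0..} else {1..})"
    using assms by (auto simp: bernoulli_cdf_def)
  then show ?thesis by (simp add: gen_inv_def)
qed

lemma expit_gt_0: "0 < expit t" and expit_less_1: "expit t < 1"
  unfolding expit_def by (auto simp: divide_simps add_pos_pos)

lemma integral_std_normal_bernoulli_threshold:
  assumes "0 < p" "p < 1" "t > 0" "Phi l = 1 - p"
  shows "(\<integral>e. gen_inv (bernoulli_cdf p) (Phi ((A + e) / t)) \<partial>std_normal) = 1 - Phi (t * l - A)"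
proof -
  interpret prob_space std_normal by (rule prob_space_std_normal)
  have "gen_inv (bernoulli_cdf p) (Phi ((A + e) / t)) = indicator {t * l - A<..} e" for e
  proof -
    have "Phi ((A + e) / t) \<le> 1 - p \<longleftrightarrow> e \<le> t * l - A"
      unfolding \<open>Phi l = 1 - p\<close>[symmetric] Phi_le_iff
      using \<open>t > 0\<close> by (auto simp: pos_divide_le_eq algebra_simps)
    then show ?thesis
      using assms Phi_pos Phi_le_1 by (subst gen_inv_bernoulli_cdf) auto
  qed
  moreover have "{t * l - A<..} = space std_normal - {..t * l - A}"
    by auto
  ultimately show ?thesis
    using prob_compl[of "{..t * l - A}"] by (simp add: Phi_def)
qed

lemma tau_m_pos: "0 < tau_m \<alpha>"
  unfolding tau_m_def by (simp add: add_nonneg_pos)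

lemma tau_y_pos: "0 < tau_y \<alpha> \<beta> \<gamma>"
  unfolding tau_y_def by (simp add: add_nonneg_pos)

lemma gsem_reg_normal_bernoulli:
  assumes "\<sigma>\<^sub>x > 0" "\<sigma>\<^sub>m > 0" "0 < p" "p < 1"
  shows "gsem_reg \<alpha> \<beta> \<gamma> (normal_cdf \<mu>\<^sub>x \<sigma>\<^sub>x) (normal_cdf \<mu>\<^sub>m \<sigma>\<^sub>m) (bernoulli_cdf p) x
           (gen_inv (normal_cdf \<mu>\<^sub>m \<sigma>\<^sub>m) (Phi v))
       = 1 - Phi (tau_y \<alpha> \<beta> \<gamma> * gen_inv Phi (bernoulli_cdf p 0)
                  - \<gamma> * ((x - \<mu>\<^sub>x) / \<sigma>\<^sub>x) - tau_m \<alpha> * \<beta> * v)"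
proof -
  define A where "A = \<gamma> * ((x - \<mu>\<^sub>x) / \<sigma>\<^sub>x) + \<beta> * tau_m \<alpha> * v"
  have "Phi (gen_inv Phi (bernoulli_cdf p 0)) = 1 - p"
    using assms by (simp add: bernoulli_cdf_def Phi_gen_inv_Phi)
  have "gsem_reg \<alpha> \<beta> \<gamma> (normal_cdf \<mu>\<^sub>x \<sigma>\<^sub>x) (normal_cdf \<mu>\<^sub>m \<sigma>\<^sub>m) (bernoulli_cdf p) x
          (gen_inv (normal_cdf \<mu>\<^sub>m \<sigma>\<^sub>m) (Phi v))
      = (\<integral>e. gen_inv (bernoulli_cdf p) (Phi ((A + e) / tau_y \<alpha> \<beta> \<gamma>)) \<partial>std_normal)"
    using assms(1,2) by (simp add: gsem_reg_def normal_cdf_eq_Phi gen_inv_normal_cdf_Phi A_def)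
  also have "\<dots> = 1 - Phi (tau_y \<alpha> \<beta> \<gamma> * gen_inv Phi (bernoulli_cdf p 0) - A)"
    by (rule integral_std_normal_bernoulli_threshold) (use assms tau_y_pos \<open>Phi _ = 1 - p\<close> in auto)
  finally show ?thesis
    by (simp add: A_def algebra_simps)
qed

lemma gsem_cf_normal_bernoulli:
  assumes "\<sigma>\<^sub>x > 0" "\<sigma>\<^sub>m > 0" "0 < p" "p < 1"
  shows "gsem_cf \<alpha> \<beta> \<gamma> (normal_cdf \<mu>\<^sub>x \<sigma>\<^sub>x) (normal_cdf \<mu>\<^sub>m \<sigma>\<^sub>m) (bernoulli_cdf p) x\<^sub>a x\<^sub>b
       = 1 - (\<integral>z. Phi (tau_y \<alpha> \<beta> \<gamma> * gen_inv Phi (bernoulli_cdf p 0)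
                         - \<gamma> * ((x\<^sub>a - \<mu>\<^sub>x) / \<sigma>\<^sub>x) - tau_m \<alpha> * \<beta> * z)
               \<partial>density lborel (normal_density (\<alpha> * ((x\<^sub>b - \<mu>\<^sub>x) / \<sigma>\<^sub>x) / tau_m \<alpha>) (1 / tau_m \<alpha>)))"
    (is "_ = 1 - (\<integral>z. ?\<psi> z \<partial>_)")
proof -
  interpret prob_space std_normal by (rule prob_space_std_normal)
  define a where "a = \<alpha> * ((x\<^sub>b - \<mu>\<^sub>x) / \<sigma>\<^sub>x)"
  have "gsem_cf \<alpha> \<beta> \<gamma> (normal_cdf \<mu>\<^sub>x \<sigma>\<^sub>x) (normal_cdf \<mu>\<^sub>m \<sigma>\<^sub>m) (bernoulli_cdf p) x\<^sub>a x\<^sub>b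
      = (\<integral>e. 1 - ?\<psi> ((a + e) / tau_m \<alpha>) \<partial>std_normal)"
    using assms by (simp add: gsem_cf_def gsem_reg_normal_bernoulli normal_cdf_eq_Phi a_def)
  also have "\<dots> = 1 - (\<integral>e. ?\<psi> ((a + e) / tau_m \<alpha>) \<partial>std_normal)"
    using Phi_pos Phi_le_1 by (subst Bochner_Integration.integral_diff)
      (auto intro!: integrable_const_bound[where B = 1] simp: less_imp_le prob_space[simplified])
  also have "\<dots> = 1 - (\<integral>z. ?\<psi> z \<partial>density lborel (normal_density (a / tau_m \<alpha>) (1 / tau_m \<alpha>)))"
    by (subst integral_std_normal_affine) (auto simp: tau_m_pos)
  finally show ?thesis
    unfolding a_def .
qed

lemma integrable_Phi_affine:
  fixes M :: "real measure"
  assumes "prob_space M" "sets M = sets borel"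
  shows "integrable M (\<lambda>z. Phi (a - k * z))"
  using Phi_pos Phi_le_1 assms
  by (intro finite_measure.integrable_const_bound[where B = 1])
    (auto simp: less_imp_le prob_space_def)

lemma integral_Phi_affine_strict_mono:
  fixes M :: "real measure"
  assumes "prob_space M" "sets M = sets borel" "a < b"
  shows "(\<integral>z. Phi (a - k * z) \<partial>M) < (\<integral>z. Phi (b - k * z) \<partial>M)"
  using assms
  by (intro finite_measure.integral_less_AE_space integrable_Phi_affine Phi_strict_mono AE_I2)
    (auto simp: prob_space_def prob_space.emeasure_space_1)

lemma integral_Phi_affine_eq_iff:
  fixes M :: "real measure"
  assumes "prob_space M" "sets M = sets borel"
  shows "(\<integral>z. Phi (a - k * z) \<partial>M) = (\<integral>z. Phi (b - k * z) \<partial>M) \<longleftrightarrow> a = b"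
  using integral_Phi_affine_strict_mono[OF assms, of a b k] integral_Phi_affine_strict_mono[OF assms, of b a k]
  by (cases a b rule: linorder_cases) auto

lemma NIE_no_indirect_path: "\<alpha> = 0 \<or> \<beta> = 0 \<Longrightarrow> NIE \<alpha> \<beta> \<gamma> Fx Fm Fy x\<^sub>0 x\<^sub>1 = 0"
  by (auto simp: NIE_def gsem_cf_def gsem_reg_def)

theorem proposition3:
  fixes w1 :: "'a::euclidean_space" and w2 :: "'b::euclidean_space"
    and beta_x :: 'a and beta_m beta_y :: "'a \<times> 'b"
    and sigma_x sigma_m \<alpha> \<beta> \<gamma> x0 x1 :: real
  assumes "sigma_x > 0" and "sigma_m > 0"
  defines "Fx \<equiv> normal_cdf (w1 \<bullet> beta_x) sigma_x"
    and "Fm \<equiv> normal_cdf ((w1, w2) \<bullet> beta_m) sigma_m"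
    and "Fy \<equiv> bernoulli_cdf (expit ((w1, w2) \<bullet> beta_y))"
    and "zx \<equiv> (\<lambda>x. (x - w1 \<bullet> beta_x) / sigma_x)"
    and "\<psi> \<equiv> (\<lambda>za zm. Phi (tau_y \<alpha> \<beta> \<gamma> * gen_inv Phi (bernoulli_cdf (expit ((w1, w2) \<bullet> beta_y)) 0) - \<gamma> * za - tau_m \<alpha> * \<beta> * zm))"
    and "\<pi> \<equiv> (\<lambda>z zm. normal_density (\<alpha> * z / tau_m \<alpha>) (1 / tau_m \<alpha>) zm)"
  shows "NDE \<alpha> \<beta> \<gamma> Fx Fm Fy x0 x1
           = (\<integral>zm. (\<psi> (zx x0) zm - \<psi> (zx x1) zm) * \<pi> (zx x0) zm \<partial>lborel)
       \<and> NIE \<alpha> \<beta> \<gamma> Fx Fm Fy x0 x1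
           = (\<integral>zm. \<psi> (zx x1) zm * \<pi> (zx x0) zm \<partial>lborel)
             - (\<integral>zm. \<psi> (zx x1) zm * \<pi> (zx x1) zm \<partial>lborel)
       \<and> (x0 \<noteq> x1 \<longrightarrow> (NDE \<alpha> \<beta> \<gamma> Fx Fm Fy x0 x1 = 0 \<longleftrightarrow> \<gamma> = 0))
       \<and> (x0 \<noteq> x1 \<longrightarrow> (\<alpha> = 0 \<or> \<beta> = 0) \<longrightarrow> NIE \<alpha> \<beta> \<gamma> Fx Fm Fy x0 x1 = 0)"
proof -
  define N where "N z = density lborel (\<pi> z)" for z
  have N: "prob_space (N z)" "sets (N z) = sets borel" for z
    by (auto simp: N_def assms(8) tau_m_pos intro!: prob_space_normal_density)
  have [measurable]: "\<psi> za \<in> borel_measurable borel" for za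
    unfolding assms(7) by measurable
  have \<psi>_integrable: "integrable (N z) (\<psi> za)" for z za
    unfolding assms(7) by (rule integrable_Phi_affine[OF N])
  have N_lborel: "(\<integral>zm. f zm \<partial>N z) = (\<integral>zm. f zm * \<pi> z zm \<partial>lborel)"
    if [measurable]: "f \<in> borel_measurable borel" for f z
    by (simp add: N_def assms(8) integral_density mult.commute)
  have cf: "gsem_cf \<alpha> \<beta> \<gamma> Fx Fm Fy xa xb = 1 - (\<integral>zm. \<psi> (zx xa) zm \<partial>N (zx xb))" for xa xb
    using gsem_cf_normal_bernoulli[OF assms(1,2) expit_gt_0 expit_less_1]
    unfolding N_def assms(3-8) by simp
  have NDE_diff: "NDE \<alpha> \<beta> \<gamma> Fx Fm Fy x0 x1
      = (\<integral>zm. \<psi> (zx x0) zm \<partial>N (zx x0)) - (\<integral>zm. \<psi> (zx x1) zm \<partial>N (zx x0))"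
    by (simp add: NDE_def cf)
  have NDE: "NDE \<alpha> \<beta> \<gamma> Fx Fm Fy x0 x1
      = (\<integral>zm. (\<psi> (zx x0) zm - \<psi> (zx x1) zm) * \<pi> (zx x0) zm \<partial>lborel)"
    unfolding NDE_diff Bochner_Integration.integral_diff[OF \<psi>_integrable \<psi>_integrable, symmetric]
    by (simp add: N_lborel)
  have NIE: "NIE \<alpha> \<beta> \<gamma> Fx Fm Fy x0 x1
      = (\<integral>zm. \<psi> (zx x1) zm * \<pi> (zx x0) zm \<partial>lborel) - (\<integral>zm. \<psi> (zx x1) zm * \<pi> (zx x1) zm \<partial>lborel)"
    by (simp add: NIE_def cf N_lborel)
  have "NDE \<alpha> \<beta> \<gamma> Fx Fm Fy x0 x1 = 0 \<longleftrightarrow> \<gamma> = 0" if "x0 \<noteq> x1"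
  proof -
    have "NDE \<alpha> \<beta> \<gamma> Fx Fm Fy x0 x1 = 0 \<longleftrightarrow> \<gamma> * zx x0 = \<gamma> * zx x1"
      unfolding NDE_diff right_minus_eq assms(7) integral_Phi_affine_eq_iff[OF N] by simp
    also have "\<dots> \<longleftrightarrow> \<gamma> = 0"
      using that assms(1) by (auto simp: assms(6) divide_simps)
    finally show ?thesis .
  qed
  then show ?thesis
    using NDE NIE NIE_no_indirect_path by blast
qed

end
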